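(* Let $m\ge 11$ be odd and let $t_1\ge 2$ be an integer with $3t_1\le m-4$ and $m-3t_1$ even. Then $\rho(F_0(t_1,\tfrac{m-3t_1}{2},0))<\rho(F_0(1,\tfrac{m-3}{2},0))$, where $\rho(F_0(1,\frac{m-3}{2},0))$ is the largest root of $x^4-x^3+(1-m)x^2+(m-3)x+m-3=0$ and $\rho(F_0(t_1,\frac{m-3t_1}{2},0))$ is the largest root of $x^4-x^3+(t_1-m)x^2+(m-3t_1)x-3t_1^2+mt_1=0$.
   Context: $\rho(G)$ denotes the largest eigenvalue of the adjacency matrix of $G$. For integers $t_1\ge0$, $t_2\ge 1$, the graph $F_0(t_1,t_2,0)$ consists of a central vertex $u^*$, $t_1$ triangles $u^*a_ib_i$ ($i=1,\dots,t_1$) sharing only $u^*$, and further vertices $v,u_1,\dots,u_{t_2}$ with each $u_j$ adjacent to both $u^*$ and $v$; there are no other vertices or edges. It has $3t_1+2t_2$ edges. In particular $F_0(1,t_2,0)$ is $K_{2,t_2}$ with a triangle attached at a vertex of maximum degree. *)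

theory Defs
  imports "Jordan_Normal_Form.Char_Poly"
begin

text \<open>Vertices of F_0(t1,t2,0) are 0..<F0_card t1 t2:
  u* = 0; a_i = 2i-1, b_i = 2i (1 <= i <= t1); v = 2 t1 + 1; u_j = 2 t1 + 1 + j (1 <= j <= t2).\<close>

definition F0_card :: "nat \<Rightarrow> nat \<Rightarrow> nat" where
  "F0_card t1 t2 = 2 * t1 + t2 + 2"

definition F0_edges :: "nat \<Rightarrow> nat \<Rightarrow> (nat \<times> nat) set" where
  "F0_edges t1 t2 =
     (\<Union>i\<in>{1..t1}. {(0, 2*i-1), (0, 2*i), (2*i-1, 2*i)}) \<union>
     (\<Union>j\<in>{1..t2}. {(0, 2*t1+1+j), (2*t1+1, 2*t1+1+j)})"

definition F0_adj :: "nat \<Rightarrow> nat \<Rightarrow> nat \<Rightarrow> nat \<Rightarrow> bool" where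
  "F0_adj t1 t2 x y \<longleftrightarrow> (x, y) \<in> F0_edges t1 t2 \<or> (y, x) \<in> F0_edges t1 t2"

definition adj_matrix_F0 :: "nat \<Rightarrow> nat \<Rightarrow> real mat" where
  "adj_matrix_F0 t1 t2 =
     mat (F0_card t1 t2) (F0_card t1 t2) (\<lambda>(x, y). if F0_adj t1 t2 x y then 1 else 0)"

definition rho :: "real mat \<Rightarrow> real" where
  "rho A = Max {x. eigenvalue A x}"

definition largest_root :: "(real \<Rightarrow> real) \<Rightarrow> real" where
  "largest_root f = Max {x. f x = 0}"

end

theory Submission
  imports Defs
begin

text \<open>
  Let \<open>x\<close> be an eigenvector of \<open>F\<^sub>0(t\<^sub>1,t\<^sub>2,0)\<close> for an eigenvalue \<open>\<lambda> > 1\<close>, with value \<open>a\<close> at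
  \<open>u*\<close> and \<open>c\<close> at \<open>v\<close>. The eigen-equations at the triangle vertices and at the \<open>u\<^sub>j\<close> force
  the values \<open>a/(\<lambda>-1)\<close> and \<open>(a+c)/\<lambda>\<close> there, and the two remaining equations at \<open>u*\<close> and \<open>v\<close>
  have a nonzero solution exactly when \<open>\<lambda>\<close> is a root of the quartic
  \<open>x\<^sup>4 - x\<^sup>3 - 2(t\<^sub>1+t\<^sub>2)x\<^sup>2 + 2t\<^sub>2x + 2t\<^sub>1t\<^sub>2\<close> (for the converse one needs \<open>\<lambda>\<^sup>2 > t\<^sub>2\<close>).
  The quartic is negative at \<open>\<surd>t\<^sub>2\<close>, so its largest root exceeds \<open>\<surd>t\<^sub>2 > 1\<close> and is the
  spectral radius. Trading \<open>t\<^sub>1 - 1\<close> triangles for additional vertices \<open>u\<^sub>j\<close> at a fixed number of edges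
  changes the quartic by \<open>(t\<^sub>1-1)(x(x-3) + 2t\<^sub>2 - 3)\<close>, which is positive beyond \<open>3\<close>; since the
  largest root for \<open>t\<^sub>1 = 1\<close> exceeds \<open>3\<close>, the largest root strictly drops.
\<close>

lemma F0_edges_iff:
  "(x, y) \<in> F0_edges t1 t2 \<longleftrightarrow>
     (\<exists>i. 1 \<le> i \<and> i \<le> t1 \<and> (x = 0 \<and> y = 2*i-1 \<or> x = 0 \<and> y = 2*i \<or> x = 2*i-1 \<and> y = 2*i)) \<or>
     (\<exists>j. 1 \<le> j \<and> j \<le> t2 \<and> (x = 0 \<and> y = 2*t1+1+j \<or> x = 2*t1+1 \<and> y = 2*t1+1+j))"
  unfolding F0_edges_def by auto

lemma odd_neq_even_nat [simp]:
  "Suc (2*a) \<noteq> 2*(b::nat)" "2*(b::nat) \<noteq> Suc (2*a)"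
  "Suc (Suc (2*a)) \<noteq> 2*(b::nat) - Suc 0" "2*(b::nat) - Suc 0 \<noteq> Suc (Suc (2*a))"
  by presburger+

lemma ex_triangle_vertex_iff:
  "(\<exists>i::nat. 1 \<le> i \<and> i \<le> t \<and> (y = 2*i-1 \<or> y = 2*i)) \<longleftrightarrow> 1 \<le> y \<and> y \<le> 2*t"
proof
  assume "1 \<le> y \<and> y \<le> 2*t"
  then show "\<exists>i::nat. 1 \<le> i \<and> i \<le> t \<and> (y = 2*i-1 \<or> y = 2*i)"
    by (intro exI[of _ "(y+1) div 2"]) presburger
qed auto

definition F0_nbrs :: "nat \<Rightarrow> nat \<Rightarrow> nat \<Rightarrow> nat set" where
  "F0_nbrs t1 t2 k = {j. j < F0_card t1 t2 \<and> F0_adj t1 t2 k j}"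

lemma F0_adj_center:
  "F0_adj t1 t2 0 y \<longleftrightarrow> 1 \<le> y \<and> y \<le> 2*t1 \<or> 2*t1+2 \<le> y \<and> y \<le> 2*t1+1+t2"
proof -
  have "F0_adj t1 t2 0 y \<longleftrightarrow>
      (\<exists>i::nat. 1 \<le> i \<and> i \<le> t1 \<and> (y = 2*i-1 \<or> y = 2*i)) \<or> (\<exists>j. 1 \<le> j \<and> j \<le> t2 \<and> y = 2*t1+1+j)"
    unfolding F0_adj_def F0_edges_iff by auto
  then show ?thesis
    unfolding ex_triangle_vertex_iff by (auto intro!: exI[of _ "y - (2*t1+1)"])
qed

lemma F0_nbrs_center: "F0_nbrs t1 t2 0 = {1..2*t1} \<union> {2*t1+2..2*t1+1+t2}"
  unfolding F0_nbrs_def F0_adj_center F0_card_def by auto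

lemma F0_nbrs_triangle:
  assumes "1 \<le> i" "i \<le> t1"
  shows "F0_nbrs t1 t2 (2*i-1) = {0, 2*i}" "F0_nbrs t1 t2 (2*i) = {0, 2*i-1}"
proof -
  obtain p where p: "i = Suc p"
    using assms(1) by (cases i) auto
  show "F0_nbrs t1 t2 (2*i-1) = {0, 2*i}" "F0_nbrs t1 t2 (2*i) = {0, 2*i-1}"
    using assms unfolding p F0_nbrs_def F0_adj_def F0_edges_iff F0_card_def by auto
qed

lemma F0_nbrs_hub: "F0_nbrs t1 t2 (2*t1+1) = {2*t1+2..2*t1+1+t2}"
proof -
  have adj: "F0_adj t1 t2 (2*t1+1) y \<longleftrightarrow> 2*t1+2 \<le> y \<and> y \<le> 2*t1+1+t2" for y
    unfolding F0_adj_def F0_edges_iff by (auto intro!: exI[of _ "y - (2*t1+1)"])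
  show ?thesis
    unfolding F0_nbrs_def adj F0_card_def by auto
qed

lemma F0_nbrs_spoke:
  assumes "1 \<le> j" "j \<le> t2"
  shows "F0_nbrs t1 t2 (2*t1+1+j) = {0, 2*t1+1}"
proof -
  have adj: "F0_adj t1 t2 (2*t1+1+j) y \<longleftrightarrow> y = 0 \<or> y = 2*t1+1" for y
    using assms unfolding F0_adj_def F0_edges_iff by auto
  show ?thesis
    using assms unfolding F0_nbrs_def adj F0_card_def by auto
qed

lemma F0_vertex_cases:
  assumes "k < F0_card t1 t2"
  obtains "k = 0"
    | i where "1 \<le> i" "i \<le> t1" "k = 2*i-1"
    | i where "1 \<le> i" "i \<le> t1" "k = 2*i"
    | "k = 2*t1+1"
    | j where "1 \<le> j" "j \<le> t2" "k = 2*t1+1+j"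
proof -
  consider "k = 0" | "1 \<le> k \<and> k \<le> 2*t1" | "k = 2*t1+1" | "2*t1+2 \<le> k \<and> k \<le> 2*t1+1+t2"
    using assms unfolding F0_card_def by linarith
  then show ?thesis
  proof cases
    case 2
    then obtain i where "1 \<le> i" "i \<le> t1" "k = 2*i-1 \<or> k = 2*i"
      using ex_triangle_vertex_iff[of t1 k] by blast
    then show ?thesis using that(2,3) by blast
  next
    case 4
    show ?thesis by (rule that(5)[of "k - (2*t1+1)"]) (use 4 in auto)
  qed (use that in auto)
qed

lemma adj_matrix_F0_carrier: "adj_matrix_F0 t1 t2 \<in> carrier_mat (F0_card t1 t2) (F0_card t1 t2)"
  unfolding adj_matrix_F0_def by simp

lemma mult_adj_matrix_F0_index:
  assumes "v \<in> carrier_vec (F0_card t1 t2)" "k < F0_card t1 t2"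
  shows "(adj_matrix_F0 t1 t2 *\<^sub>v v) $ k = (\<Sum>j\<in>F0_nbrs t1 t2 k. v $ j)"
proof -
  have "(adj_matrix_F0 t1 t2 *\<^sub>v v) $ k =
      (\<Sum>j\<in>{0..<F0_card t1 t2}. if F0_adj t1 t2 k j then v $ j else 0)"
    using assms unfolding adj_matrix_F0_def by (auto simp: scalar_prod_def intro: sum.cong)
  also have "\<dots> = (\<Sum>j\<in>F0_nbrs t1 t2 k. v $ j)"
    unfolding F0_nbrs_def by (simp add: sum.inter_filter[symmetric])
  finally show ?thesis .
qed

definition F0_profile :: "nat \<Rightarrow> nat \<Rightarrow> real \<Rightarrow> real \<Rightarrow> real \<Rightarrow> real vec" where
  "F0_profile t1 t2 l a c = vec (F0_card t1 t2)
     (\<lambda>k. if k = 0 then a else if k \<le> 2*t1 then a/(l-1) else if k = 2*t1+1 then c else (a+c)/l)"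

lemma dim_vec_F0_profile [simp]: "dim_vec (F0_profile t1 t2 l a c) = F0_card t1 t2"
  unfolding F0_profile_def by simp

lemma F0_profile_carrier: "F0_profile t1 t2 l a c \<in> carrier_vec (F0_card t1 t2)"
  unfolding F0_profile_def by simp

lemma F0_profile_nth:
  "F0_profile t1 t2 l a c $ 0 = a"
  "1 \<le> k \<Longrightarrow> k \<le> 2*t1 \<Longrightarrow> F0_profile t1 t2 l a c $ k = a/(l-1)"
  "F0_profile t1 t2 l a c $ (2*t1+1) = c"
  "2*t1+2 \<le> k \<Longrightarrow> k \<le> 2*t1+1+t2 \<Longrightarrow> F0_profile t1 t2 l a c $ k = (a+c)/l"
  by (simp_all add: F0_profile_def F0_card_def)

lemma mult_adj_matrix_F0_profile:
  fixes t1 t2 :: nat and l a c :: real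
  assumes "l > 1"
  defines "w \<equiv> F0_profile t1 t2 l a c"
  shows "(adj_matrix_F0 t1 t2 *\<^sub>v w) $ 0 = 2 * real t1 * (a/(l-1)) + real t2 * ((a+c)/l)"
    and "(adj_matrix_F0 t1 t2 *\<^sub>v w) $ (2*t1+1) = real t2 * ((a+c)/l)"
    and "k < F0_card t1 t2 \<Longrightarrow> k \<noteq> 0 \<Longrightarrow> k \<noteq> 2*t1+1 \<Longrightarrow> (adj_matrix_F0 t1 t2 *\<^sub>v w) $ k = l * w $ k"
proof -
  have mult: "(adj_matrix_F0 t1 t2 *\<^sub>v w) $ k = (\<Sum>j\<in>F0_nbrs t1 t2 k. w $ j)" if "k < F0_card t1 t2" for k
    unfolding w_def using mult_adj_matrix_F0_index[OF F0_profile_carrier that] .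
  have "(\<Sum>j\<in>{1..2*t1}. w $ j) = (\<Sum>j\<in>{1..2*t1}. a/(l-1))"
    unfolding w_def by (rule sum.cong) (simp_all add: F0_profile_nth)
  then have triangles: "(\<Sum>j\<in>{1..2*t1}. w $ j) = 2 * real t1 * (a/(l-1))"
    by simp
  have "(\<Sum>j\<in>{2*t1+2..2*t1+1+t2}. w $ j) = (\<Sum>j\<in>{2*t1+2..2*t1+1+t2}. (a+c)/l)"
    unfolding w_def by (rule sum.cong) (simp_all add: F0_profile_nth)
  also have "\<dots> = real t2 * ((a+c)/l)"
    by simp
  finally have spokes: "(\<Sum>j\<in>{2*t1+2..2*t1+1+t2}. w $ j) = real t2 * ((a+c)/l)" .
  have "(\<Sum>j\<in>F0_nbrs t1 t2 0. w $ j) = (\<Sum>j\<in>{1..2*t1}. w $ j) + (\<Sum>j\<in>{2*t1+2..2*t1+1+t2}. w $ j)"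
    unfolding F0_nbrs_center by (rule sum.union_disjoint) auto
  then show "(adj_matrix_F0 t1 t2 *\<^sub>v w) $ 0 = 2 * real t1 * (a/(l-1)) + real t2 * ((a+c)/l)"
    using mult[of 0] unfolding triangles spokes by (simp add: F0_card_def)
  show "(adj_matrix_F0 t1 t2 *\<^sub>v w) $ (2*t1+1) = real t2 * ((a+c)/l)"
    using mult[of "2*t1+1"] unfolding F0_nbrs_hub spokes by (simp add: F0_card_def)
  assume k: "k < F0_card t1 t2" "k \<noteq> 0" "k \<noteq> 2*t1+1"
  have triangle_vertex: "a + a/(l-1) = l * (a/(l-1))"
    using assms(1) by (simp add: field_simps)
  from k(1) show "(adj_matrix_F0 t1 t2 *\<^sub>v w) $ k = l * w $ k"
  proof (cases rule: F0_vertex_cases)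
    case (2 i)
    then show ?thesis
      using mult[OF k(1), unfolded 2(3) F0_nbrs_triangle(1)[OF 2(1,2)]] triangle_vertex
      by (simp add: w_def F0_profile_nth)
  next
    case (3 i)
    then show ?thesis
      using mult[OF k(1), unfolded 3(3) F0_nbrs_triangle(2)[OF 3(1,2)]] triangle_vertex
      by (simp add: w_def F0_profile_nth)
  next
    case (5 j)
    then show ?thesis
      using mult[OF k(1), unfolded 5(3) F0_nbrs_spoke[OF 5(1,2)]] assms(1)
      by (simp add: w_def F0_profile_def F0_card_def)
  qed (use k in auto)
qed

lemma F0_profile_eigen_iff:
  assumes "l > 1"
  shows "adj_matrix_F0 t1 t2 *\<^sub>v F0_profile t1 t2 l a c = l \<cdot>\<^sub>v F0_profile t1 t2 l a c \<longleftrightarrow>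
    l * a = 2 * real t1 * (a/(l-1)) + real t2 * ((a+c)/l) \<and> l * c = real t2 * ((a+c)/l)"
    (is "?eigen \<longleftrightarrow> ?center \<and> ?hub")
proof -
  let ?w = "F0_profile t1 t2 l a c"
  have center_entry: "?w $ 0 = a" and hub_entry: "?w $ (2*t1+1) = c"
    by (fact F0_profile_nth(1), fact F0_profile_nth(3))
  show ?thesis
  proof
    assume eigen: ?eigen
    have "(adj_matrix_F0 t1 t2 *\<^sub>v ?w) $ k = l * ?w $ k" if "k < F0_card t1 t2" for k
      unfolding eigen using that by simp
    from this[of 0] this[of "2*t1+1"] show "?center \<and> ?hub"
      unfolding mult_adj_matrix_F0_profile(1,2)[OF assms] hub_entry center_entry
      by (simp add: F0_card_def)
  next
    assume balance: "?center \<and> ?hub"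
    show ?eigen
    proof (rule eq_vecI)
      fix k
      assume "k < dim_vec (l \<cdot>\<^sub>v ?w)"
      then have k: "k < F0_card t1 t2" by simp
      have "(adj_matrix_F0 t1 t2 *\<^sub>v ?w) $ k = l * ?w $ k"
      proof (cases "k = 0 \<or> k = 2*t1+1")
        case True
        then consider "k = 0" | "k = 2*t1+1" by blast
        then show ?thesis
        proof cases
          case 1
          show ?thesis
            using balance unfolding 1 mult_adj_matrix_F0_profile(1)[OF assms] center_entry by simp
        next
          case 2
          show ?thesis
            using balance unfolding 2 mult_adj_matrix_F0_profile(2)[OF assms] hub_entry by simp
        qed
      next
        case False
        then show ?thesis
          using mult_adj_matrix_F0_profile(3)[OF assms k] by simp
      qed
      with k show "(adj_matrix_F0 t1 t2 *\<^sub>v ?w) $ k = (l \<cdot>\<^sub>v ?w) $ k"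
        by simp
    qed (simp add: adj_matrix_F0_def)
  qed
qed

lemma eigenvector_adj_matrix_F0_eq_profile:
  assumes v: "v \<in> carrier_vec (F0_card t1 t2)"
    and eigen: "adj_matrix_F0 t1 t2 *\<^sub>v v = l \<cdot>\<^sub>v v" and "l > 1"
  shows "v = F0_profile t1 t2 l (v $ 0) (v $ (2*t1+1))"
proof -
  define a where "a = v $ 0"
  define c where "c = v $ (2*t1+1)"
  have balance: "(\<Sum>j\<in>F0_nbrs t1 t2 k. v $ j) = l * v $ k" if "k < F0_card t1 t2" for k
  proof -
    have "(adj_matrix_F0 t1 t2 *\<^sub>v v) $ k = (l \<cdot>\<^sub>v v) $ k"
      by (simp only: eigen)
    then show ?thesis
      using v that by (simp add: mult_adj_matrix_F0_index)
  qed
  have triangle: "v $ (2*i-1) = a/(l-1) \<and> v $ (2*i) = a/(l-1)" if i: "1 \<le> i" "i \<le> t1" for i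
  proof -
    have "2*i-1 < F0_card t1 t2" "2*i < F0_card t1 t2"
      using i by (auto simp: F0_card_def)
    from balance[OF this(1)] balance[OF this(2)]
    have e1: "a + v $ (2*i) = l * v $ (2*i-1)" and e2: "a + v $ (2*i-1) = l * v $ (2*i)"
      unfolding F0_nbrs_triangle[OF i] a_def using i by simp_all
    then have "(l+1) * (v $ (2*i-1) - v $ (2*i)) = 0"
      by (simp add: algebra_simps)
    with \<open>l > 1\<close> have same: "v $ (2*i-1) = v $ (2*i)"
      by simp
    with e2 have "(l-1) * v $ (2*i) = a"
      by (simp add: algebra_simps)
    with same \<open>l > 1\<close> show ?thesis
      by (simp add: field_simps)
  qed
  have spoke: "v $ (2*t1+1+j) = (a+c)/l" if j: "1 \<le> j" "j \<le> t2" for j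
  proof -
    have "2*t1+1+j < F0_card t1 t2"
      using j by (simp add: F0_card_def)
    from balance[OF this] have "a + c = l * v $ (2*t1+1+j)"
      unfolding F0_nbrs_spoke[OF j] a_def c_def by simp
    then show ?thesis
      using \<open>l > 1\<close> by (simp add: field_simps)
  qed
  have "v = F0_profile t1 t2 l a c"
  proof (rule eq_vecI)
    fix k
    assume "k < dim_vec (F0_profile t1 t2 l a c)"
    then have "k < F0_card t1 t2" by simp
    then show "v $ k = F0_profile t1 t2 l a c $ k"
    proof (cases rule: F0_vertex_cases)
      case 1
      then show ?thesis by (simp add: F0_profile_nth a_def)
    next
      case (2 i)
      then show ?thesis using triangle[of i] by (simp add: F0_profile_nth)
    next
      case (3 i)
      then show ?thesis using triangle[of i] by (simp add: F0_profile_nth)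
    next
      case 4
      show ?thesis unfolding 4 c_def by (rule F0_profile_nth(3)[symmetric])
    next
      case (5 j)
      then show ?thesis using spoke[of j] by (simp add: F0_profile_nth)
    qed
  qed (use v in simp)
  then show ?thesis
    unfolding a_def c_def .
qed

definition F0_poly :: "nat \<Rightarrow> nat \<Rightarrow> real poly" where
  "F0_poly t1 t2 = [:2 * real t1 * real t2, 2 * real t2, - 2 * (real t1 + real t2), -1, 1:]"

lemma poly_F0_poly:
  "poly (F0_poly t1 t2) x =
     x^4 - x^3 - 2 * (real t1 + real t2) * x^2 + 2 * real t2 * x + 2 * real t1 * real t2"
  by (simp add: F0_poly_def eval_nat_numeral algebra_simps)

lemma lead_coeff_F0_poly: "lead_coeff (F0_poly t1 t2) = 1"
  by (simp add: F0_poly_def)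

lemma poly_F0_poly_sqrt_neg:
  assumes "t2 \<ge> 2"
  shows "poly (F0_poly t1 t2) (sqrt (real t2)) < 0"
proof -
  define s where "s = sqrt (real t2)"
  have s2: "s^2 = real t2" and "s > 1"
    using assms by (simp_all add: s_def)
  then have "s * 1 < s * s"
    by (intro mult_strict_left_mono) auto
  then have "s < real t2"
    using s2 by (simp add: power2_eq_square)
  have "poly (F0_poly t1 t2) s = real t2 * (s - real t2)"
    unfolding poly_F0_poly s2[symmetric] by (simp add: eval_nat_numeral algebra_simps)
  with \<open>s < real t2\<close> assms show ?thesis
    unfolding s_def by (simp add: mult_pos_neg)
qed

lemma F0_balance_imp_root:
  assumes "l > 1" "t2 \<ge> 1" "a \<noteq> 0 \<or> c \<noteq> 0"
    and center: "l * a = 2 * real t1 * (a/(l-1)) + real t2 * ((a+c)/l)"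
    and hub: "l * c = real t2 * ((a+c)/l)"
  shows "poly (F0_poly t1 t2) l = 0"
proof -
  have hub': "c * (l^2 - real t2) = real t2 * a"
    using hub \<open>l > 1\<close> by (simp add: field_simps power2_eq_square)
  have "l * a = 2 * real t1 * (a/(l-1)) + l * c"
    using center hub by simp
  then have "(l-1) * (l * a) = 2 * real t1 * a + (l-1) * (l * c)"
    using \<open>l > 1\<close> by (simp add: field_simps)
  then have "l * ((l-1) * (l * a)) = l * (2 * real t1 * a + (l-1) * (l * c))"
    by simp
  then have center': "l^2 * (l-1) * a = 2 * real t1 * l * a + l^2 * (l-1) * c"
    by (simp add: power2_eq_square algebra_simps)
  have "l * a * poly (F0_poly t1 t2) l =
      (l^2 - real t2) * (l^2 * (l-1) * a - (2 * real t1 * l * a + l^2 * (l-1) * c))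
      + l^2 * (l-1) * (c * (l^2 - real t2) - real t2 * a)"
    unfolding poly_F0_poly by (simp add: eval_nat_numeral algebra_simps)
  then have "l * a * poly (F0_poly t1 t2) l = 0"
    using center' hub' by simp
  moreover have "a \<noteq> 0"
  proof
    assume "a = 0"
    with center \<open>l > 1\<close> \<open>t2 \<ge> 1\<close> have "c = 0"
      by simp
    with \<open>a = 0\<close> assms(3) show False
      by simp
  qed
  ultimately show ?thesis
    using \<open>l > 1\<close> by simp
qed

lemma F0_root_imp_balance:
  assumes "poly (F0_poly t1 t2) l = 0" "l > 1" "l^2 > real t2"
  defines "c \<equiv> real t2 / (l^2 - real t2)"
  shows "l * 1 = 2 * real t1 * (1/(l-1)) + real t2 * ((1+c)/l)"
    and "l * c = real t2 * ((1+c)/l)"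
proof -
  have nz: "l - 1 \<noteq> 0" "l^2 - real t2 \<noteq> 0" "l \<noteq> 0"
    using assms(2,3) by auto
  show hub: "l * c = real t2 * ((1+c)/l)"
    unfolding c_def using nz by (simp add: field_simps power2_eq_square)
  have c: "c * (l^2 - real t2) = real t2"
    unfolding c_def using nz by simp
  have "l * (l-1) * (l^2 - real t2) = 2 * real t1 * (l^2 - real t2) + real t2 * l * (l-1)"
    using assms(1) unfolding poly_F0_poly by (simp add: eval_nat_numeral algebra_simps)
  also have "\<dots> = ((l-1) * (l^2 - real t2)) * (2 * real t1 * (1/(l-1))) + l * (l-1) * (c * (l^2 - real t2))"
    using nz unfolding c by simp
  also have "\<dots> = ((l-1) * (l^2 - real t2)) * (2 * real t1 * (1/(l-1)) + l * c)"
    by (simp add: algebra_simps)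
  finally have "((l-1) * (l^2 - real t2)) * l = ((l-1) * (l^2 - real t2)) * (2 * real t1 * (1/(l-1)) + l * c)"
    by (simp add: algebra_simps)
  then have "l = 2 * real t1 * (1/(l-1)) + l * c"
    using nz by simp
  with hub show "l * 1 = 2 * real t1 * (1/(l-1)) + real t2 * ((1+c)/l)"
    by simp
qed

lemma eigenvalue_adj_matrix_F0_imp_root:
  assumes "eigenvalue (adj_matrix_F0 t1 t2) l" "l > 1" "t2 \<ge> 1"
  shows "poly (F0_poly t1 t2) l = 0"
proof -
  obtain v where v: "v \<in> carrier_vec (F0_card t1 t2)" "v \<noteq> 0\<^sub>v (F0_card t1 t2)"
    and eigen: "adj_matrix_F0 t1 t2 *\<^sub>v v = l \<cdot>\<^sub>v v"
    using assms(1) adj_matrix_F0_carrier[of t1 t2] unfolding eigenvalue_def eigenvector_def by auto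
  define a where "a = v $ 0"
  define c where "c = v $ (2*t1+1)"
  have profile: "v = F0_profile t1 t2 l a c"
    unfolding a_def c_def by (rule eigenvector_adj_matrix_F0_eq_profile[OF v(1) eigen assms(2)])
  have "a \<noteq> 0 \<or> c \<noteq> 0"
  proof (rule ccontr)
    assume "\<not> (a \<noteq> 0 \<or> c \<noteq> 0)"
    then have "v = 0\<^sub>v (F0_card t1 t2)"
      unfolding profile by (intro eq_vecI) (auto simp: F0_profile_def)
    with v(2) show False ..
  qed
  moreover have "l * a = 2 * real t1 * (a/(l-1)) + real t2 * ((a+c)/l) \<and> l * c = real t2 * ((a+c)/l)"
    using eigen F0_profile_eigen_iff[OF assms(2)] unfolding profile by blast
  ultimately show ?thesis
    using F0_balance_imp_root assms(2,3) by blast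
qed

lemma root_imp_eigenvalue_adj_matrix_F0:
  assumes "poly (F0_poly t1 t2) l = 0" "l > 1" "l^2 > real t2"
  shows "eigenvalue (adj_matrix_F0 t1 t2) l"
proof -
  let ?w = "F0_profile t1 t2 l 1 (real t2 / (l^2 - real t2))"
  have "adj_matrix_F0 t1 t2 *\<^sub>v ?w = l \<cdot>\<^sub>v ?w"
    using F0_root_imp_balance[OF assms] F0_profile_eigen_iff[OF assms(2)] by blast
  moreover have "?w \<noteq> 0\<^sub>v (F0_card t1 t2)"
  proof
    assume "?w = 0\<^sub>v (F0_card t1 t2)"
    then have "?w $ 0 = 0"
      by (simp add: F0_card_def)
    then show False
      by (simp add: F0_profile_nth)
  qed
  ultimately show ?thesis
    unfolding eigenvalue_def eigenvector_def using adj_matrix_F0_carrier[of t1 t2] F0_profile_carrier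
    by (auto intro!: exI[of _ ?w])
qed

lemma finite_eigenvalues:
  fixes A :: "'a :: field mat"
  assumes "A \<in> carrier_mat n n"
  shows "finite {x. eigenvalue A x}"
proof -
  have "char_poly A \<noteq> 0"
    using degree_monic_char_poly[OF assms] by auto
  then show ?thesis
    using poly_roots_finite eigenvalue_root_char_poly[OF assms] by simp
qed

lemma root_le_largest_root:
  fixes p :: "real poly"
  assumes "p \<noteq> 0" "poly p x = 0"
  shows "x \<le> largest_root (poly p)"
  unfolding largest_root_def using assms poly_roots_finite by (intro Max_ge) auto

lemma largest_root_poly_gt:
  fixes p :: "real poly"
  assumes "lead_coeff p > 0" "poly p x < 0"
  shows "x < largest_root (poly p)" and "poly p (largest_root (poly p)) = 0"
proof -
  have "p \<noteq> 0"
    using assms(1) by auto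
  obtain n where n: "\<And>y. y \<ge> n \<Longrightarrow> poly p y \<ge> lead_coeff p"
    using poly_pinfty_gt_lc[OF assms(1)] by blast
  have "poly p (max n (x+1)) > 0"
    using n[of "max n (x+1)"] assms(1) by simp
  moreover have "x < max n (x+1)"
    by simp
  ultimately obtain z where "x < z" "poly p z = 0"
    using poly_IVT_pos[of x "max n (x+1)" p] assms(2) by blast
  moreover have "finite {y. poly p y = 0}"
    using poly_roots_finite[OF \<open>p \<noteq> 0\<close>] .
  ultimately show "poly p (largest_root (poly p)) = 0"
    unfolding largest_root_def using Max_in[of "{y. poly p y = 0}"] by auto
  show "x < largest_root (poly p)"
    using \<open>x < z\<close> root_le_largest_root[OF \<open>p \<noteq> 0\<close> \<open>poly p z = 0\<close>] by simp
qed

lemma rho_adj_matrix_F0: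
  assumes "t2 \<ge> 2"
  shows "rho (adj_matrix_F0 t1 t2) = largest_root (poly (F0_poly t1 t2))"
proof -
  let ?r = "largest_root (poly (F0_poly t1 t2))"
  have "F0_poly t1 t2 \<noteq> 0"
    using lead_coeff_F0_poly[of t1 t2] by auto
  have lc: "lead_coeff (F0_poly t1 t2) > 0"
    by (simp add: lead_coeff_F0_poly)
  note neg = poly_F0_poly_sqrt_neg[OF assms, of t1]
  have "sqrt (real t2) < ?r" and root: "poly (F0_poly t1 t2) ?r = 0"
    using largest_root_poly_gt[OF lc neg] by auto
  moreover have "1 < sqrt (real t2)"
    using assms by simp
  ultimately have "?r > 1"
    by linarith
  have "real t2 = (sqrt (real t2))^2"
    by simp
  also have "\<dots> < ?r^2"
    using \<open>sqrt (real t2) < ?r\<close> by (intro power_strict_mono) auto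
  finally have "?r^2 > real t2" .
  have "?r \<in> {x. eigenvalue (adj_matrix_F0 t1 t2) x}"
    using root_imp_eigenvalue_adj_matrix_F0[OF root \<open>?r > 1\<close> \<open>?r^2 > real t2\<close>] by simp
  moreover have "x \<le> ?r" if "eigenvalue (adj_matrix_F0 t1 t2) x" for x
  proof (cases "x > 1")
    case True
    then show ?thesis
      using eigenvalue_adj_matrix_F0_imp_root[OF that] assms
        root_le_largest_root[OF \<open>F0_poly t1 t2 \<noteq> 0\<close>] by simp
  qed (use \<open>?r > 1\<close> in simp)
  ultimately show ?thesis
    unfolding rho_def using finite_eigenvalues[OF adj_matrix_F0_carrier] by (intro Max_eqI) auto
qed

lemma poly_F0_poly_trade_triangles:
  assumes "2 * real t2' = 2 * real t2 + 3 * real t1 - 3"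
  shows "poly (F0_poly t1 t2) x = poly (F0_poly 1 t2') x + (real t1 - 1) * (x * (x - 3) + 2 * real t2 - 3)"
proof -
  have "poly (F0_poly t1 t2) x - poly (F0_poly 1 t2') x - (real t1 - 1) * (x * (x - 3) + 2 * real t2 - 3)
      = (x^2 - x - 1) * (2 * real t2' - (2 * real t2 + 3 * real t1 - 3))"
    unfolding poly_F0_poly by (simp add: algebra_simps power2_eq_square)
  with assms show ?thesis
    by simp
qed

lemma largest_root_F0_poly_less:
  assumes size: "2 * real t2' = 2 * real t2 + 3 * real t1 - 3" and "t1 \<ge> 2" "t2 \<ge> 2"
  shows "largest_root (poly (F0_poly t1 t2)) < largest_root (poly (F0_poly 1 t2'))"
proof (rule ccontr)
  let ?r = "largest_root (poly (F0_poly t1 t2))"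
  let ?r' = "largest_root (poly (F0_poly 1 t2'))"
  assume "\<not> ?r < ?r'"
  have lc: "lead_coeff (F0_poly t t') > 0" for t t'
    by (simp add: lead_coeff_F0_poly)
  have "real t1 \<ge> 2" "real t2 \<ge> 2"
    using assms(2,3) by simp_all
  with size have "real t2' > 3"
    by linarith
  then have "real t2' \<ge> 4"
    by simp
  have "poly (F0_poly 1 t2') 3 = 36 - 10 * real t2'"
    unfolding poly_F0_poly by simp
  also have "\<dots> < 0"
    using \<open>real t2' \<ge> 4\<close> by simp
  finally have "3 < ?r'"
    using largest_root_poly_gt(1)[OF lc] by blast
  have "poly (F0_poly 1 t2') ?r \<ge> 0"
    using largest_root_poly_gt(1)[OF lc, of 1 t2' ?r] \<open>\<not> ?r < ?r'\<close> by linarith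
  moreover have "(real t1 - 1) * (?r * (?r - 3) + 2 * real t2 - 3) > 0"
  proof -
    have "?r * (?r - 3) > 0"
      using \<open>3 < ?r'\<close> \<open>\<not> ?r < ?r'\<close> by simp
    with \<open>real t1 \<ge> 2\<close> \<open>real t2 \<ge> 2\<close> show ?thesis
      by simp
  qed
  moreover have "poly (F0_poly t1 t2) ?r = 0"
    using largest_root_poly_gt(2)[OF lc poly_F0_poly_sqrt_neg[OF \<open>t2 \<ge> 2\<close>]] .
  ultimately show False
    using poly_F0_poly_trade_triangles[OF size, of ?r] by linarith
qed

theorem mainTheorem11:
  fixes m t1 :: nat
  assumes "m \<ge> 11" and "odd m" and "t1 \<ge> 2" and "3 * t1 \<le> m - 4" and "even (m - 3 * t1)"
  shows "rho (adj_matrix_F0 t1 ((m - 3 * t1) div 2)) < rho (adj_matrix_F0 1 ((m - 3) div 2))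
       \<and> rho (adj_matrix_F0 1 ((m - 3) div 2)) =
           largest_root (\<lambda>x. x^4 - x^3 + (1 - real m) * x^2 + (real m - 3) * x + real m - 3)
       \<and> rho (adj_matrix_F0 t1 ((m - 3 * t1) div 2)) =
           largest_root (\<lambda>x. x^4 - x^3 + (real t1 - real m) * x^2 + (real m - 3 * real t1) * x
                              - 3 * (real t1)^2 + real m * real t1)"
proof -
  define t2' where "t2' = (m - 3) div 2"
  define t2 where "t2 = (m - 3 * t1) div 2"
  have "2 * t2' = m - 3" "2 * t2 = m - 3 * t1"
    unfolding t2'_def t2_def using assms(1,2,5) by presburger+
  with assms(1,4) have size': "real m = 2 * real t2' + 3" and size: "real m = 2 * real t2 + 3 * real t1"
    and "t2' \<ge> 2" "t2 \<ge> 2"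
    by (simp_all add: of_nat_diff flip: of_nat_mult)
  have "(\<lambda>x. x^4 - x^3 + (1 - real m) * x^2 + (real m - 3) * x + real m - 3) = poly (F0_poly 1 t2')"
    unfolding size' by (intro ext) (simp add: poly_F0_poly algebra_simps)
  moreover have "(\<lambda>x. x^4 - x^3 + (real t1 - real m) * x^2 + (real m - 3 * real t1) * x
                    - 3 * (real t1)^2 + real m * real t1) = poly (F0_poly t1 t2)"
    unfolding size by (intro ext) (simp add: poly_F0_poly algebra_simps power2_eq_square)
  moreover have "largest_root (poly (F0_poly t1 t2)) < largest_root (poly (F0_poly 1 t2'))"
    using size size' \<open>t1 \<ge> 2\<close> \<open>t2 \<ge> 2\<close> by (intro largest_root_F0_poly_less) auto
  ultimately show ?thesis
    unfolding t2'_def[symmetric] t2_def[symmetric] rho_adj_matrix_F0[OF \<open>t2' \<ge> 2\<close>]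
      rho_adj_matrix_F0[OF \<open>t2 \<ge> 2\<close>]
    by simp
qed

end
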